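(* Assume $p_1<1$, and assume either that $\mu\le1$, or that $\mu>1$ and $p_0+\cdots+p_r<1$. Then for this integer $r\ge0$, the equation $G_r(t)=t$ has a unique solution $t=q_{[0,r]}$ in $[0,1]$, and $$\mathbf{P}[M\le r]=q_{[0,r]}.$$
   Context: Let $p=(p_0,p_1,p_2,\dots)$ be a probability distribution on the nonnegative integers with mean $\mu=\sum_k kp_k\in(0,\infty)$, and let $\tau(p)$ be a Galton–Watson tree with offspring distribution $p$: it starts with a single root at generation $0$, and every vertex independently has $k$ children with probability $p_k$. The out-degree of a vertex is its number of children. $M_n$ denotes the maximal out-degree among the vertices of generation $n$ (with $M_n=0$ if generation $n$ is empty), and $M=\sup_{n\ge0}M_n$ is the global maximal out-degree (possibly infinite). For $x\in[0,1]$, $G_r(x)=\sum_{k=0}^r p_kx^k$ is the generating function of $p$ truncated at $r$. *)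

theory Defs
  imports "HOL-Probability.Probability"
begin

text \<open>Galton--Watson tree in Ulam--Harris encoding: vertices are finite lists of
natural numbers, the root is the empty list, and the children of a vertex u are
u @ [i] for i < xi u.\<close>

definition gw_vertices :: "(nat list \<Rightarrow> 'a \<Rightarrow> nat) \<Rightarrow> 'a \<Rightarrow> nat list set" where
  "gw_vertices xi w = {u. \<forall>j < length u. u ! j < xi (take j u) w}"

text \<open>Maximal out-degree in generation n (0 if the generation is empty).\<close>
definition gw_gen_max :: "(nat list \<Rightarrow> 'a \<Rightarrow> nat) \<Rightarrow> nat \<Rightarrow> 'a \<Rightarrow> enat" where
  "gw_gen_max xi n w = (SUP u \<in> {u \<in> gw_vertices xi w. length u = n}. enat (xi u w))"

definition gw_max :: "(nat list \<Rightarrow> 'a \<Rightarrow> nat) \<Rightarrow> 'a \<Rightarrow> enat" where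
  "gw_max xi w = (SUP n. gw_gen_max xi n w)"

definition trunc_gf :: "nat pmf \<Rightarrow> nat \<Rightarrow> real \<Rightarrow> real" where
  "trunc_gf p r x = (\<Sum>k\<le>r. pmf p k * x ^ k)"

definition offspring_mean :: "nat pmf \<Rightarrow> real" where
  "offspring_mean p = (\<Sum>k. real k * pmf p k)"

end

theory Submission
  imports Defs
begin

text \<open>The event that all vertices of depth less than n have at most r children decomposes
according to the offspring number k \<le> r of the root into k independent copies of the same
event for depth n - 1; hence its probability is the n-th iterate of G_r at 1. These events
decrease to the event M \<le> r, and the iterates decrease to a fixed point of G_r in [0,1].
That fixed point is unique: if G_r(1) < 1, convexity of G_r forbids two fixed points; if
G_r(1) = 1, the mean of p is at most 1 and p is not concentrated on 1, so Bernoulli's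
inequality leaves 1 as the only fixed point.\<close>

lemma Bernoulli_inequality_strict:
  fixes x :: real
  assumes "-1 \<le> x" "x \<noteq> 0" "2 \<le> n"
  shows "1 + real n * x < (1 + x) ^ n"
proof -
  obtain m where m: "n = Suc m" "1 \<le> m" using assms(3) by (cases n) auto
  have "1 + real n * x < 1 + real n * x + real m * x\<^sup>2"
    using assms(2) m(2) by simp
  also have "\<dots> = (1 + x) * (1 + real m * x)"
    using m(1) by (simp add: power2_eq_square algebra_simps)
  also have "\<dots> \<le> (1 + x) ^ n"
    using Bernoulli_inequality[OF assms(1), of m] assms(1) m(1) by (simp add: mult_left_mono)
  finally show ?thesis .
qed

lemma funpow_one_tendsto_fixed_point:
  fixes f :: "real \<Rightarrow> real"
  assumes mono: "mono_on {0..1} f" and maps: "f ` {0..1} \<subseteq> {0..1}"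
    and cont: "continuous_on {0..1} f"
  obtains t where "t \<in> {0..1}" "f t = t" "(\<lambda>n. (f ^^ n) 1) \<longlonglongrightarrow> t"
proof -
  define x where "x n = (f ^^ n) 1" for n
  have x_range: "x n \<in> {0..1}" for n
    by (induction n) (use maps in \<open>auto simp: x_def image_subset_iff\<close>)
  have "x (Suc n) \<le> x n" for n
  proof (induction n)
    case 0
    show ?case using x_range[of 1] by (simp add: x_def)
  next
    case (Suc n)
    then have "f (x (Suc n)) \<le> f (x n)"
      using mono_onD[OF mono x_range x_range] by blast
    then show ?case by (simp add: x_def)
  qed
  then obtain t where lim: "x \<longlonglongrightarrow> t" and below: "\<forall>n. t \<le> x n"
    using decseq_convergent[of x 0] x_range by (auto simp: decseq_Suc_iff)
  have "0 \<le> t"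
    by (rule LIMSEQ_le_const[OF lim]) (use x_range in auto)
  with below[rule_format, of 0] have t_range: "t \<in> {0..1}"
    by (simp add: x_def)
  have "(\<lambda>n. f (x n)) \<longlonglongrightarrow> f t"
    using continuous_on_tendsto_compose[OF cont lim t_range] x_range by simp
  moreover have "(\<lambda>n. f (x n)) \<longlonglongrightarrow> t"
    using LIMSEQ_Suc[OF lim] by (simp add: x_def)
  ultimately have "f t = t" by (rule LIMSEQ_unique)
  from t_range this lim[unfolded x_def] show thesis by (rule that)
qed

lemma sum_pmf_atMost_le_1:
  fixes p :: "nat pmf" and r :: nat
  shows "(\<Sum>k\<le>r. pmf p k) \<le> 1"
proof -
  have "(\<Sum>k\<le>r. pmf p k) = measure_pmf.prob p {..r}"
    by (subst measure_measure_pmf_finite) auto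
  then show ?thesis by simp
qed

lemma trunc_gf_nonneg: "0 \<le> x \<Longrightarrow> 0 \<le> trunc_gf p r x"
  unfolding trunc_gf_def by (intro sum_nonneg mult_nonneg_nonneg) auto

lemma trunc_gf_mono: "0 \<le> x \<Longrightarrow> x \<le> y \<Longrightarrow> trunc_gf p r x \<le> trunc_gf p r y"
  unfolding trunc_gf_def by (intro sum_mono mult_left_mono power_mono) auto

lemma trunc_gf_1: "trunc_gf p r 1 = (\<Sum>k\<le>r. pmf p k)"
  unfolding trunc_gf_def by simp

lemma continuous_on_trunc_gf: "continuous_on A (trunc_gf p r)"
  unfolding trunc_gf_def by (intro continuous_intros)

lemma trunc_gf_maps_unit_interval: "trunc_gf p r ` {0..1} \<subseteq> {0..1}"
proof clarsimp
  fix x :: real assume "0 \<le> x" "x \<le> 1"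
  then have "trunc_gf p r x \<le> trunc_gf p r 1"
    by (rule trunc_gf_mono)
  then show "0 \<le> trunc_gf p r x \<and> trunc_gf p r x \<le> 1"
    using \<open>0 \<le> x\<close> trunc_gf_nonneg sum_pmf_atMost_le_1[of p r] by (simp add: trunc_gf_1)
qed

definition trunc_gf_slope :: "nat pmf \<Rightarrow> nat \<Rightarrow> real \<Rightarrow> real \<Rightarrow> real" where
  "trunc_gf_slope p r a b = (\<Sum>k\<le>r. pmf p k * (\<Sum>i<k. a ^ (k - Suc i) * b ^ i))"

lemma trunc_gf_diff: "trunc_gf p r b - trunc_gf p r a = (b - a) * trunc_gf_slope p r a b"
proof -
  have "trunc_gf p r b - trunc_gf p r a = (\<Sum>k\<le>r. pmf p k * (b ^ k - a ^ k))"
    by (simp add: trunc_gf_def sum_subtractf[symmetric] right_diff_distrib)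
  also have "\<dots> = (b - a) * trunc_gf_slope p r a b"
    by (simp add: trunc_gf_slope_def power_diff_sumr2 sum_distrib_left mult.left_commute)
  finally show ?thesis .
qed

lemma trunc_gf_slope_mono:
  "0 \<le> a \<Longrightarrow> a \<le> a' \<Longrightarrow> 0 \<le> b \<Longrightarrow> b \<le> b' \<Longrightarrow> trunc_gf_slope p r a b \<le> trunc_gf_slope p r a' b'"
  unfolding trunc_gf_slope_def
  by (intro sum_mono mult_left_mono mult_mono power_mono) auto

lemma trunc_gf_fixed_points_eq_if_deficient:
  assumes deficient: "(\<Sum>k\<le>r. pmf p k) < 1"
    and ab: "0 \<le> a" "a \<le> b" "b \<le> 1" and fixed: "trunc_gf p r a = a" "trunc_gf p r b = b"
  shows "a = b"
proof (rule ccontr)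
  assume "a \<noteq> b"
  with ab have "a < b" by simp
  then have "trunc_gf_slope p r a b = 1"
    using trunc_gf_diff[of p r b a] fixed by simp
  \<comment> \<open>secant slopes of a convex function increase\<close>
  then have "1 \<le> trunc_gf_slope p r b 1"
    using trunc_gf_slope_mono[of a b b 1 p r] ab by simp
  then have "1 - b \<le> trunc_gf p r 1 - b"
    using trunc_gf_diff[of p r 1 b] fixed ab mult_left_mono[of 1 _ "1 - b"] by simp
  with deficient show False by (simp add: trunc_gf_1)
qed

lemma trunc_gf_fixed_point_eq_1:
  assumes total: "(\<Sum>k\<le>r. pmf p k) = 1" and mean: "(\<Sum>k\<le>r. real k * pmf p k) \<le> 1"
    and p1: "pmf p 1 < 1" and a: "0 \<le> a" "a \<le> 1" and fixed: "trunc_gf p r a = a"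
  shows "a = 1"
proof (rule ccontr)
  assume "a \<noteq> 1"
  with a have a_lt: "a < 1" by simp
  define T where "T = (\<Sum>k\<le>r. real k * pmf p k)"
  define d where "d k = a ^ k - (1 + real k * (a - 1))" for k
  have d_nonneg: "0 \<le> d k" for k
    using Bernoulli_inequality[of "a - 1" k] a by (simp add: d_def)
  have "(\<Sum>k\<le>r. pmf p k * d k) = trunc_gf p r a - (\<Sum>k\<le>r. pmf p k) - (a - 1) * T"
    by (simp add: d_def trunc_gf_def T_def algebra_simps sum_subtractf sum.distrib sum_distrib_left)
  also have "\<dots> = (a - 1) * (1 - T)"
    using total fixed by (simp add: algebra_simps)
  finally have sum_d: "(\<Sum>k\<le>r. pmf p k * d k) = (a - 1) * (1 - T)" .
  have "(a - 1) * (1 - T) \<le> 0"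
    using a_lt mean by (simp add: T_def mult_nonpos_nonneg)
  moreover have "0 \<le> (\<Sum>k\<le>r. pmf p k * d k)"
    using d_nonneg by (simp add: sum_nonneg)
  ultimately have "(\<Sum>k\<le>r. pmf p k * d k) = 0" and "T = 1"
    using sum_d a_lt by auto
  then have terms_zero: "pmf p k * d k = 0" if "k \<le> r" for k
    using d_nonneg that by (subst (asm) sum_nonneg_eq_0_iff) auto
  have d_pos: "0 < d k" if "2 \<le> k" for k
    using Bernoulli_inequality_strict[of "a - 1" k] a a_lt that by (simp add: d_def)
  have "pmf p k = 0" if "2 \<le> k" "k \<le> r" for k
    using terms_zero[OF that(2)] d_pos[OF that(1)] by simp
  then have "real k * pmf p k = (if k = 1 then pmf p 1 else 0)" if "k \<le> r" for k
    using that by (cases "k \<le> 1") (auto simp: le_Suc_eq)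
  then have "T = (if 1 \<le> r then pmf p 1 else 0)"
    unfolding T_def by (simp add: sum.delta)
  with \<open>T = 1\<close> p1 show False by (simp split: if_splits)
qed

lemma trunc_gf_fixed_point_unique:
  assumes p1: "pmf p 1 < 1"
    and mean_or_deficient: "(\<Sum>k\<le>r. pmf p k) < 1 \<or> (\<Sum>k\<le>r. real k * pmf p k) \<le> 1"
    and a: "a \<in> {0..1}" "trunc_gf p r a = a" and b: "b \<in> {0..1}" "trunc_gf p r b = b"
  shows "a = b"
proof (cases "(\<Sum>k\<le>r. pmf p k) < 1")
  case deficient: True
  show ?thesis
    using trunc_gf_fixed_points_eq_if_deficient[OF deficient, of a b]
      trunc_gf_fixed_points_eq_if_deficient[OF deficient, of b a] a b
    by (cases "a \<le> b") auto
next
  case False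
  then have total: "(\<Sum>k\<le>r. pmf p k) = 1" and mean: "(\<Sum>k\<le>r. real k * pmf p k) \<le> 1"
    using sum_pmf_atMost_le_1[of p r] mean_or_deficient by simp_all
  have "a = 1" and "b = 1"
    using trunc_gf_fixed_point_eq_1[OF total mean p1] a b by simp_all
  then show ?thesis by simp
qed

definition tree_vertices :: "(nat list \<Rightarrow> nat) \<Rightarrow> nat list set" where
  "tree_vertices g = {u. \<forall>j < length u. u ! j < g (take j u)}"

lemma Nil_in_tree_vertices: "[] \<in> tree_vertices g"
  by (simp add: tree_vertices_def)

lemma Cons_in_tree_vertices:
  "i # v \<in> tree_vertices g \<longleftrightarrow> i < g [] \<and> v \<in> tree_vertices (\<lambda>u. g (i # u))"
  unfolding tree_vertices_def by (simp add: All_less_Suc2)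

fun outdeg_le_below :: "nat \<Rightarrow> nat \<Rightarrow> (nat list \<Rightarrow> nat) \<Rightarrow> bool" where
  "outdeg_le_below r 0 g = True"
| "outdeg_le_below r (Suc n) g \<longleftrightarrow>
     g [] \<le> r \<and> (\<forall>i < g []. outdeg_le_below r n (\<lambda>u. g (i # u)))"

lemma outdeg_le_below_iff:
  "outdeg_le_below r n g \<longleftrightarrow> (\<forall>u \<in> tree_vertices g. length u < n \<longrightarrow> g u \<le> r)"
proof (induction n arbitrary: g)
  case 0
  then show ?case by simp
next
  case (Suc n)
  have "(\<forall>u \<in> tree_vertices g. length u < Suc n \<longrightarrow> g u \<le> r) \<longleftrightarrow>
        g [] \<le> r \<and> (\<forall>i < g []. \<forall>v \<in> tree_vertices (\<lambda>u. g (i # u)). length v < n \<longrightarrow> g (i # v) \<le> r)"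
    (is "?L \<longleftrightarrow> ?R")
  proof
    assume ?L
    then show ?R by (auto simp: Nil_in_tree_vertices Cons_in_tree_vertices)
  next
    assume ?R
    show ?L
    proof (intro ballI impI)
      fix u assume "u \<in> tree_vertices g" "length u < Suc n"
      with \<open>?R\<close> show "g u \<le> r" by (cases u) (auto simp: Cons_in_tree_vertices)
    qed
  qed
  then show ?case
    by (simp add: Suc.IH)
qed

lemma outdeg_le_below_Suc_imp: "outdeg_le_below r (Suc n) g \<Longrightarrow> outdeg_le_below r n g"
  by (simp add: outdeg_le_below_iff)

lemma gw_max_le_iff: "gw_max xi w \<le> enat r \<longleftrightarrow> (\<forall>n. outdeg_le_below r n (\<lambda>u. xi u w))"
proof -
  have "gw_vertices xi w = tree_vertices (\<lambda>u. xi u w)"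
    by (simp add: gw_vertices_def tree_vertices_def)
  then have "gw_max xi w \<le> enat r \<longleftrightarrow> (\<forall>u \<in> tree_vertices (\<lambda>u. xi u w). xi u w \<le> r)"
    by (auto simp: gw_max_def gw_gen_max_def SUP_le_iff)
  also have "\<dots> \<longleftrightarrow> (\<forall>n. outdeg_le_below r n (\<lambda>u. xi u w))"
    unfolding outdeg_le_below_iff by (metis lessI)
  finally show ?thesis .
qed

lemma measurable_outdeg_le_below:
  assumes "\<And>u. X u \<in> measurable N (count_space UNIV)"
  shows "Measurable.pred N (\<lambda>w. outdeg_le_below r n (\<lambda>u. X u w))"
  using assms
proof (induction n arbitrary: X)
  case 0
  then show ?case by simp
next
  case (Suc n)
  have root: "Measurable.pred N (\<lambda>w. P (X [] w))" for P :: "nat \<Rightarrow> bool"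
    by (rule measurable_compose[OF Suc.prems[of "[]"]]) simp
  have subtrees: "Measurable.pred N (\<lambda>w. outdeg_le_below r n (\<lambda>u. X (i # u) w))" for i
    using Suc.IH[of "\<lambda>u. X (i # u)"] Suc.prems by blast
  show ?case
    by (simp only: outdeg_le_below.simps)
      (intro pred_intros_logic pred_intros_countable subtrees
        root[of "\<lambda>k. k \<le> r"] root[of "\<lambda>k. i < k" for i])
qed

context prob_space
begin

lemma prob_eq_pmf:
  assumes "random_variable (count_space UNIV) X" and "distr M (count_space UNIV) X = measure_pmf p"
  shows "prob {w \<in> space M. X w = k} = pmf p k"
proof -
  have "prob {w \<in> space M. X w = k} = measure (distr M (count_space UNIV) X) {k}"
    using assms(1) by (subst measure_distr) (auto intro: arg_cong[where f = prob])
  then show ?thesis by (simp add: assms(2) measure_pmf_single)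
qed

text \<open>The root label and the label families of the subtrees of the root are independent
because they are read off pairwise disjoint sets of indices.\<close>

lemma prob_root_and_subtrees:
  fixes xi :: "'i \<Rightarrow> 'a \<Rightarrow> nat" and \<phi> :: "nat list \<Rightarrow> 'i"
  assumes indep: "indep_vars (\<lambda>_. count_space UNIV) xi UNIV" and "inj \<phi>"
    and Q: "Measurable.pred (Pi\<^sub>M UNIV (\<lambda>_. count_space UNIV)) Q"
  shows "prob {w \<in> space M. xi (\<phi> []) w = k \<and> (\<forall>i<k. Q (\<lambda>u. xi (\<phi> (i # u)) w))}
       = prob {w \<in> space M. xi (\<phi> []) w = k} * (\<Prod>i<k. prob {w \<in> space M. Q (\<lambda>u. xi (\<phi> (i # u)) w)})"
proof -
  define K where "K j = (case j of None \<Rightarrow> {\<phi> []} | Some i \<Rightarrow> \<phi> ` range (Cons i))" for j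
  let ?S = "\<lambda>j. Pi\<^sub>M (K j) (\<lambda>_. count_space UNIV :: nat measure)"
  let ?Y = "\<lambda>j w. restrict (\<lambda>u. xi u w) (K j)"
  have "disjoint_family_on K UNIV"
    using \<open>inj \<phi>\<close> by (auto simp: disjoint_family_on_def K_def inj_eq split: option.splits)
  then have indep_Y: "indep_vars ?S ?Y UNIV"
    by (intro indep_vars_restrict[OF indep]) auto
  define A where "A j = (case j of None \<Rightarrow> {f \<in> space (?S None). f (\<phi> []) = k}
      | Some i \<Rightarrow> {f \<in> space (?S (Some i)). Q (\<lambda>u. f (\<phi> (i # u)))})" for j
  have "A j \<in> sets (?S j)" for j
  proof (cases j)
    case None
    have "Measurable.pred (?S None) (\<lambda>f. f (\<phi> []) = k)"
      by (rule measurable_compose[OF measurable_component_singleton]) (auto simp: K_def)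
    then show ?thesis using None by (simp add: A_def pred_def)
  next
    case (Some i)
    have "(\<lambda>f u. f (\<phi> (i # u))) \<in> measurable (?S (Some i)) (Pi\<^sub>M UNIV (\<lambda>_. count_space UNIV))"
      by (rule measurable_PiM_single') (auto simp: K_def space_PiM)
    then have "Measurable.pred (?S (Some i)) (\<lambda>f. Q (\<lambda>u. f (\<phi> (i # u))))"
      using measurable_compose Q by blast
    then show ?thesis using Some by (simp add: A_def pred_def)
  qed
  then have "prob (\<Inter>j \<in> insert None (Some ` {..<k}). ?Y j -` A j \<inter> space M)
      = (\<Prod>j \<in> insert None (Some ` {..<k}). prob (?Y j -` A j \<inter> space M))"
    by (intro indep_varsD[OF indep_Y]) auto
  moreover have "(\<Inter>j \<in> insert None (Some ` {..<k}). ?Y j -` A j \<inter> space M)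
      = {w \<in> space M. xi (\<phi> []) w = k \<and> (\<forall>i<k. Q (\<lambda>u. xi (\<phi> (i # u)) w))}"
    by (auto simp: A_def K_def space_PiM)
  moreover have "?Y None -` A None \<inter> space M = {w \<in> space M. xi (\<phi> []) w = k}"
    and "?Y (Some i) -` A (Some i) \<inter> space M = {w \<in> space M. Q (\<lambda>u. xi (\<phi> (i # u)) w)}" for i
    by (auto simp: A_def K_def space_PiM)
  ultimately show ?thesis
    by (simp add: prod.reindex)
qed

lemma prob_outdeg_le_below:
  assumes indep: "indep_vars (\<lambda>_. count_space UNIV) xi UNIV"
    and distr: "\<And>u. distr M (count_space UNIV) (xi u) = measure_pmf p" and "inj \<phi>"
  shows "prob {w \<in> space M. outdeg_le_below r n (\<lambda>u. xi (\<phi> u) w)} = (trunc_gf p r ^^ n) 1"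
  using \<open>inj \<phi>\<close>
proof (induction n arbitrary: \<phi>)
  case 0
  then show ?case by (simp add: prob_space)
next
  case (Suc n)
  have xi_meas: "random_variable (count_space UNIV) (xi u)" for u
    using indep by (simp add: indep_vars_def)
  define F where "F k = {w \<in> space M. xi (\<phi> []) w = k \<and>
      (\<forall>i<k. outdeg_le_below r n (\<lambda>u. xi (\<phi> (i # u)) w))}" for k
  have "Measurable.pred M (\<lambda>w. xi (\<phi> []) w = k \<and>
      (\<forall>i<k. outdeg_le_below r n (\<lambda>u. xi (\<phi> (i # u)) w)))" for k
    by (intro pred_intros_logic pred_intros_countable measurable_outdeg_le_below
        measurable_compose[OF xi_meas]) auto
  then have F_sets: "F k \<in> events" for k
    by (simp add: F_def pred_def)
  have "inj (\<lambda>u. \<phi> (i # u))" for i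
    using Suc.prems by (auto simp: inj_def)
  then have "prob (F k) = pmf p k * ((trunc_gf p r ^^ n) 1) ^ k" for k
    unfolding F_def
    by (simp add: prob_root_and_subtrees[OF indep Suc.prems] Suc.IH
        prob_eq_pmf[OF xi_meas distr] measurable_outdeg_le_below measurable_component_singleton)
  moreover have "{w \<in> space M. outdeg_le_below r (Suc n) (\<lambda>u. xi (\<phi> u) w)} = (\<Union>k\<le>r. F k)"
    by (auto simp: F_def)
  moreover have "prob (\<Union>k\<le>r. F k) = (\<Sum>k\<le>r. prob (F k))"
    using F_sets by (intro finite_measure_finite_Union) (auto simp: disjoint_family_on_def F_def)
  ultimately show ?case
    by (simp add: trunc_gf_def[where x = "(trunc_gf p r ^^ n) 1"])
qed

lemma trunc_gf_iterates_tendsto_prob_gw_max_le: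
  assumes indep: "indep_vars (\<lambda>_. count_space UNIV) xi UNIV"
    and distr: "\<And>u. distr M (count_space UNIV) (xi u) = measure_pmf p"
  shows "(\<lambda>n. (trunc_gf p r ^^ n) 1) \<longlonglongrightarrow> prob {w \<in> space M. gw_max xi w \<le> enat r}"
proof -
  define A where "A n = {w \<in> space M. outdeg_le_below r n (\<lambda>u. xi u w)}" for n
  have "range A \<subseteq> events"
    using indep by (auto simp: A_def indep_vars_def intro: measurable_outdeg_le_below[THEN predE])
  moreover have "decseq A"
    unfolding decseq_Suc_iff A_def using outdeg_le_below_Suc_imp by blast
  ultimately have "(\<lambda>n. prob (A n)) \<longlonglongrightarrow> prob (\<Inter>n. A n)"
    by (rule finite_Lim_measure_decseq)
  moreover have "prob (A n) = (trunc_gf p r ^^ n) 1" for n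
    using prob_outdeg_le_below[OF indep distr, of id] by (simp add: A_def)
  moreover have "(\<Inter>n. A n) = {w \<in> space M. gw_max xi w \<le> enat r}"
    by (auto simp: A_def gw_max_le_iff)
  ultimately show ?thesis by simp
qed

end

theorem lemma2p5:
  fixes M :: "'a measure" and xi :: "nat list \<Rightarrow> 'a \<Rightarrow> nat" and p :: "nat pmf" and r :: nat
  assumes "prob_space M"
    and "prob_space.indep_vars M (\<lambda>_. count_space UNIV) xi UNIV"
    and "\<And>u. distr M (count_space UNIV) (xi u) = measure_pmf p"
    and "summable (\<lambda>k. real k * pmf p k)"
    and "offspring_mean p > 0"
    and "pmf p 1 < 1"
    and "offspring_mean p \<le> 1 \<or> (offspring_mean p > 1 \<and> (\<Sum>k\<le>r. pmf p k) < 1)"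
  shows "(\<exists>!t. t \<in> {0..1} \<and> trunc_gf p r t = t) \<and>
         measure M {w \<in> space M. gw_max xi w \<le> enat r}
           = (THE t. t \<in> {0..1} \<and> trunc_gf p r t = t)"
proof -
  interpret prob_space M by fact
  have "mono_on {0..1} (trunc_gf p r)"
    by (rule mono_onI) (simp add: trunc_gf_mono)
  then obtain q where q: "q \<in> {0..1}" "trunc_gf p r q = q"
    and lim: "(\<lambda>n. (trunc_gf p r ^^ n) 1) \<longlonglongrightarrow> q"
    using funpow_one_tendsto_fixed_point trunc_gf_maps_unit_interval continuous_on_trunc_gf by blast
  have "(\<Sum>k\<le>r. real k * pmf p k) \<le> offspring_mean p"
    unfolding offspring_mean_def by (rule sum_le_suminf[OF assms(4)]) auto
  then have "t = q" if "t \<in> {0..1}" "trunc_gf p r t = t" for t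
    using trunc_gf_fixed_point_unique[OF assms(6) _ that q] assms(7) by linarith
  with q have unique: "\<exists>!t. t \<in> {0..1} \<and> trunc_gf p r t = t"
    and the_eq: "(THE t. t \<in> {0..1} \<and> trunc_gf p r t = t) = q"
    by blast+
  have "prob {w \<in> space M. gw_max xi w \<le> enat r} = q"
    using LIMSEQ_unique[OF trunc_gf_iterates_tendsto_prob_gw_max_le[OF assms(2,3)] lim] .
  with unique the_eq show ?thesis by simp
qed

end
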